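(* Let $F \subseteq \mathbb{Z}_2^\omega$ be a set such that Alter has a winning strategy in the game $\mathcal{G}(F)$. Then there exists an equivalence class $X$ of the relation $\sim$ on $\mathbb{Z}_2^\omega$ such that $X\cap F=\emptyset$.
   Context: $\mathbb{Z}_2^\omega$ is the set of infinite binary sequences indexed by $\omega=\{0,1,2,\dots\}$; $\mathbb{Z}_2^+=\bigcup_{n\ge1}\mathbb{Z}_2^n$ is the set of nonempty finite binary words. The Hamming distance is $\mathrm{hd}(x,y)=|\{k: x(k)\ne y(k)\}|\in\omega\cup\{\omega\}$, and $x\sim y$ iff $\mathrm{hd}(x,y)$ is finite. For $F\subseteq \mathbb{Z}_2^\omega$, $\mathcal{G}(F)$ is the following infinite two-player game of perfect information: players Ego and Alter alternately choose words in $\mathbb{Z}_2^+$, Ego moving first; if the moves are $\epsilon_0,\alpha_1,\epsilon_1,\alpha_2,\dots$, the outcome is the concatenation $\epsilon_0\alpha_1\epsilon_1\alpha_2\cdots\in\mathbb{Z}_2^\omega$. Ego wins if the outcome lies in $F$, otherwise Alter wins. A strategy for Alter is a function $a:\bigcup_{n\ge1}(\mathbb{Z}_2^+)^n\to\mathbb{Z}_2^+$ (Alter's $i$-th move being $\alpha_i=a(\epsilon_0,\dots,\epsilon_{i-1})$); it is winning if every play in which Alter follows it has outcome not in $F$. *)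

theory Defs
  imports Main
begin

(* Infinite binary sequences Z_2^omega are modelled as nat => bool,
   nonempty finite binary words Z_2^+ as nonempty bool lists. *)

definition hamming_equiv :: "(nat \<Rightarrow> bool) \<Rightarrow> (nat \<Rightarrow> bool) \<Rightarrow> bool" where
  "hamming_equiv x y \<longleftrightarrow> finite {k. x k \<noteq> y k}"

definition inf_concat :: "(nat \<Rightarrow> bool list) \<Rightarrow> nat \<Rightarrow> bool" where
  "inf_concat w k =
     (let n = (LEAST n. k < (\<Sum>i\<le>n. length (w i)))
      in w n ! (k - (\<Sum>i<n. length (w i))))"

(* A play: Ego's moves e 0, e 1, ...; Alter's i-th move (i >= 1) is
   a [e 0, ..., e (i-1)].  The sequence of all moves in order is
   e 0, a [e 0], e 1, a [e 0, e 1], e 2, ... *)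
definition play_moves :: "(bool list list \<Rightarrow> bool list) \<Rightarrow> (nat \<Rightarrow> bool list) \<Rightarrow> nat \<Rightarrow> bool list" where
  "play_moves a e j = (if even j then e (j div 2) else a (map e [0..<Suc (j div 2)]))"

definition outcome :: "(bool list list \<Rightarrow> bool list) \<Rightarrow> (nat \<Rightarrow> bool list) \<Rightarrow> nat \<Rightarrow> bool" where
  "outcome a e = inf_concat (play_moves a e)"

definition alter_strategy :: "(bool list list \<Rightarrow> bool list) \<Rightarrow> bool" where
  "alter_strategy a \<longleftrightarrow> (\<forall>es. es \<noteq> [] \<and> (\<forall>w\<in>set es. w \<noteq> []) \<longrightarrow> a es \<noteq> [])"

definition alter_winning :: "(nat \<Rightarrow> bool) set \<Rightarrow> (bool list list \<Rightarrow> bool list) \<Rightarrow> bool" where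
  "alter_winning F a \<longleftrightarrow> alter_strategy a \<and>
     (\<forall>e. (\<forall>i. e i \<noteq> []) \<longrightarrow> outcome a e \<notin> F)"

end

theory Submission
  imports Defs "HOL-Library.Nat_Bijection" "HOL-Library.Sublist"
begin

(* Against a fixed strategy a of Alter we build x as the limit of finite words X, while
   running in parallel one play for every finite set D of positions, the play for D always
   keeping its partial outcome a prefix of X with the bits in D flipped.  Scheduling every D
   infinitely often, each of these plays is infinite and has outcome x with the bits in D
   flipped.  So the whole Hamming class of x consists of outcomes of plays against a, none of
   which lies in F when a is winning. *)

definition toggle :: "nat set \<Rightarrow> bool list \<Rightarrow> bool list" where
  "toggle D u = map (\<lambda>k. u ! k \<noteq> (k \<in> D)) [0..<length u]"

lemma length_toggle [simp]: "length (toggle D u) = length u"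
  by (simp add: toggle_def)

lemma nth_toggle [simp]: "k < length u \<Longrightarrow> toggle D u ! k = (u ! k \<noteq> (k \<in> D))"
  by (simp add: toggle_def)

lemma toggle_toggle [simp]: "toggle D (toggle D u) = u"
  by (rule nth_equalityI) auto

lemma prefix_toggle:
  assumes "prefix u v"
  shows "prefix (toggle D u) (toggle D v)"
proof -
  obtain z where "v = u @ z" using assms by (auto simp: prefix_def)
  then have "toggle D v = toggle D u @ drop (length u) (toggle D v)"
    by (intro nth_equalityI) (auto simp: nth_append)
  then show ?thesis by (metis prefixI)
qed

lemma nth_prefix: "prefix u v \<Longrightarrow> k < length u \<Longrightarrow> u ! k = v ! k"
  by (auto simp: prefix_def nth_append)

definition prefix_limit :: "(nat \<Rightarrow> 'a list) \<Rightarrow> nat \<Rightarrow> 'a" where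
  "prefix_limit f k = f (LEAST n. k < length (f n)) ! k"

lemma nth_prefix_limit:
  assumes chain: "\<And>n. prefix (f n) (f (Suc n))" and k: "k < length (f n)"
  shows "f n ! k = prefix_limit f k"
proof -
  define m where "m = (LEAST n. k < length (f n))"
  have "k < length (f m)" "m \<le> n"
    using k LeastI[of "\<lambda>n. k < length (f n)"] Least_le[of "\<lambda>n. k < length (f n)"]
    by (auto simp: m_def)
  moreover have "prefix (f m) (f n)"
    using chain \<open>m \<le> n\<close> by (rule prefix_order.lift_Suc_mono_le)
  ultimately show ?thesis
    by (simp add: prefix_limit_def m_def[symmetric] nth_prefix)
qed

lemma map_prefix_limit:
  assumes "\<And>n. prefix (f n) (f (Suc n))"
  shows "map (prefix_limit f) [0..<length (f n)] = f n"
  using nth_prefix_limit[of f, OF assms] by (intro nth_equalityI) auto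

lemma length_concat_upt: "length (concat (map w [0..<m])) = (\<Sum>i<m. length (w i))"
  by (induction m) auto

lemma nth_inf_concat:
  assumes "k < length (concat (map w [0..<m]))"
  shows "inf_concat w k = concat (map w [0..<m]) ! k"
proof -
  define S where "S n = (\<Sum>i<n. length (w i))" for n
  have k_m: "k < S m" using assms by (simp add: S_def length_concat_upt)
  define n where "n = (LEAST n. k < S (Suc n))"
  have "m \<noteq> 0" using k_m by (cases m) (auto simp: S_def)
  then have k_n: "k < S (Suc n)" and n_m: "n < m"
    using k_m LeastI[of "\<lambda>n. k < S (Suc n)" "m - 1"] Least_le[of "\<lambda>n. k < S (Suc n)" "m - 1"]
    by (auto simp: n_def)
  have n_k: "S n \<le> k"
  proof (cases n)
    case (Suc j)
    then show ?thesis using not_less_Least[of j "\<lambda>n. k < S (Suc n)"] by (simp add: n_def)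
  qed (simp add: S_def)
  have "[0..<m] = [0..<n] @ n # [Suc n..<m]"
    using n_m upt_add_eq_append[of 0 n "m - n"] by (simp add: upt_conv_Cons)
  then have "concat (map w [0..<m]) ! k = (w n @ concat (map w [Suc n..<m])) ! (k - S n)"
    using n_k by (simp add: nth_append length_concat_upt S_def)
  also have "\<dots> = w n ! (k - S n)"
    using k_n n_k by (simp add: nth_append S_def less_diff_conv2)
  finally show ?thesis
    by (simp add: inf_concat_def Let_def S_def lessThan_Suc_atMost[symmetric] n_def)
qed

type_synonym strategy = "bool list list \<Rightarrow> bool list"

definition partial_outcome :: "strategy \<Rightarrow> bool list list \<Rightarrow> bool list" where
  "partial_outcome a h = concat (map (\<lambda>i. h ! i @ a (take (Suc i) h)) [0..<length h])"

lemma partial_outcome_Nil [simp]: "partial_outcome a [] = []"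
  by (simp add: partial_outcome_def)

lemma partial_outcome_snoc [simp]:
  "partial_outcome a (h @ [w]) = partial_outcome a h @ w @ a (h @ [w])"
  by (auto simp: partial_outcome_def nth_append intro!: arg_cong[where f = concat] map_cong)

lemma length_partial_outcome_ge:
  assumes "\<forall>w \<in> set h. w \<noteq> []"
  shows "length h \<le> length (partial_outcome a h)"
  using assms
proof (induction h rule: rev_induct)
  case (snoc w h)
  have "0 < length w" "length h \<le> length (partial_outcome a h)"
    using snoc by auto
  then show ?case by (simp del: length_greater_0_conv)
qed simp

lemma concat_play_moves:
  "concat (map (play_moves a e) [0..<2 * m]) = partial_outcome a (map e [0..<m])"
proof (induction m)
  case (Suc m)
  have "[0..<2 * Suc m] = [0..<2 * m] @ [2 * m, Suc (2 * m)]"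
    by (simp add: upt_rec[of "2 * m"])
  then show ?case
    using Suc partial_outcome_snoc[of a "map e [0..<m]" "e m"] by (simp add: play_moves_def)
qed simp

lemma nth_outcome:
  assumes "k < length (partial_outcome a (map e [0..<m]))"
  shows "outcome a e k = partial_outcome a (map e [0..<m]) ! k"
  using assms nth_inf_concat[of k "play_moves a e" "2 * m"]
  by (simp add: outcome_def concat_play_moves)

(* The word X built so far, and for each D Ego's moves so far in the play reserved for D. *)
type_synonym stage_state = "bool list \<times> (nat set \<Rightarrow> bool list list)"

(* Ego's new move w in the play for D catches up with toggle D X, plus one bit so that w is
   nonempty; X is then extended by Alter's answer, toggled back, so that this play stays
   consistent with X. *)
fun stage_step :: "strategy \<Rightarrow> nat set \<Rightarrow> stage_state \<Rightarrow> stage_state" where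
  "stage_step a D (X, H) =
     (let w = drop (length (partial_outcome a (H D))) (toggle D X) @ [False]
      in (toggle D (toggle D X @ False # a (H D @ [w])), H(D := H D @ [w])))"

definition consistent_state :: "strategy \<Rightarrow> stage_state \<Rightarrow> bool" where
  "consistent_state a s \<longleftrightarrow>
     (\<forall>D. prefix (partial_outcome a (snd s D)) (toggle D (fst s)) \<and> (\<forall>w \<in> set (snd s D). w \<noteq> []))"

lemma prefix_stage_step_history: "prefix (snd s D') (snd (stage_step a D s) D')"
  by (cases s) (simp add: Let_def)

lemma length_stage_step_history: "length (snd (stage_step a D s) D) = Suc (length (snd s D))"
  by (cases s) (simp add: Let_def)

lemma strict_prefix_stage_step_word: "strict_prefix (fst s) (fst (stage_step a D s))"
proof (cases s)
  case (Pair X H)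
  have "strict_prefix X (toggle D (toggle D X @ False # r))" for r
  proof -
    have "prefix (toggle D (toggle D X)) (toggle D (toggle D X @ False # r))"
      by (rule prefix_toggle) simp
    moreover have "length X < length (toggle D (toggle D X @ False # r))"
      by simp
    ultimately show ?thesis
      by (metis less_irrefl strict_prefix_def toggle_toggle)
  qed
  then show ?thesis
    by (simp add: Pair Let_def)
qed

lemma consistent_stage_step:
  assumes "consistent_state a s"
  shows "consistent_state a (stage_step a D s)"
proof (cases s)
  case (Pair X H)
  define p where "p = partial_outcome a (H D)"
  define w where "w = drop (length p) (toggle D X) @ [False]"
  define X' where "X' = toggle D (toggle D X @ False # a (H D @ [w]))"
  have step: "stage_step a D s = (X', H(D := H D @ [w]))"
    by (simp add: Pair X'_def w_def p_def Let_def)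
  have "prefix p (toggle D X)"
    using assms by (simp add: consistent_state_def Pair p_def)
  then have "p @ w = toggle D X @ [False]"
    by (auto simp: w_def prefix_def)
  then have outcome_D: "partial_outcome a (H D @ [w]) = toggle D X'"
    by (simp add: X'_def flip: p_def)
  have "prefix X X'"
    using strict_prefix_stage_step_word[of s a D, unfolded step] by (simp add: Pair)
  then have "prefix (partial_outcome a (H D')) (toggle D' X')" for D'
    using assms prefix_toggle prefix_order.trans by (metis Pair consistent_state_def fst_conv snd_conv)
  moreover have "\<forall>v \<in> set (H D'). v \<noteq> []" for D'
    using assms by (simp add: consistent_state_def Pair)
  ultimately show ?thesis
    using outcome_D by (simp add: consistent_state_def step w_def)
qed

definition schedule :: "nat \<Rightarrow> nat set" where
  "schedule n = set_decode (fst (prod_decode n))"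

lemma schedule_frequently:
  assumes "finite D"
  obtains n where "N \<le> n" "schedule n = D"
proof
  show "N \<le> prod_encode (set_encode D, N)" by (rule le_prod_encode_2)
  show "schedule (prod_encode (set_encode D, N)) = D" using assms by (simp add: schedule_def)
qed

fun stage :: "strategy \<Rightarrow> nat \<Rightarrow> stage_state" where
  "stage a 0 = ([], \<lambda>_. [])"
| "stage a (Suc n) = stage_step a (schedule n) (stage a n)"

lemma consistent_stage: "consistent_state a (stage a n)"
proof (induction n)
  case 0
  show ?case by (simp add: consistent_state_def)
next
  case (Suc n)
  then show ?case unfolding stage.simps by (rule consistent_stage_step)
qed

lemma prefix_stage_history:
  assumes "m \<le> n"
  shows "prefix (snd (stage a m) D) (snd (stage a n) D)"
proof (rule prefix_order.lift_Suc_mono_le[OF _ assms])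
  show "prefix (snd (stage a k) D) (snd (stage a (Suc k)) D)" for k
    unfolding stage.simps by (rule prefix_stage_step_history)
qed

lemma unbounded_stage_history:
  assumes "finite D"
  shows "\<exists>n. L \<le> length (snd (stage a n) D)"
proof (induction L)
  case (Suc L)
  then obtain n where n: "L \<le> length (snd (stage a n) D)" ..
  obtain n' where "n \<le> n'" and scheduled: "schedule n' = D"
    using schedule_frequently[OF assms] .
  have grows: "prefix (snd (stage a n) D) (snd (stage a n') D)"
    using \<open>n \<le> n'\<close> by (rule prefix_stage_history)
  have "Suc L \<le> length (snd (stage a (Suc n')) D)"
    using n scheduled prefix_length_le[OF grows] by (simp add: length_stage_step_history)
  then show ?case ..
qed simp

(* Alter's answers may be empty: Ego's nonempty moves alone make the outcome well defined. *)
lemma finite_variants_are_outcomes: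
  "\<exists>x. \<forall>D. finite D \<longrightarrow> (\<exists>e. (\<forall>i. e i \<noteq> []) \<and> outcome a e = (\<lambda>k. x k \<noteq> (k \<in> D)))"
proof -
  define X where "X n = fst (stage a n)" for n
  define H where "H D n = snd (stage a n) D" for D n
  have X_chain: "prefix (X n) (X (Suc n))" for n
    using strict_prefix_stage_step_word by (simp add: X_def strict_prefix_def)
  have H_chain: "prefix (H D n) (H D (Suc n))" for D n
    using prefix_stage_history[of n "Suc n"] by (simp add: H_def)
  have consistent: "prefix (partial_outcome a (H D n)) (toggle D (X n))"
    "\<forall>w \<in> set (H D n). w \<noteq> []" for D n
    using consistent_stage[of a n] by (simp_all add: consistent_state_def X_def H_def)
  define x where "x = prefix_limit X"
  have "\<exists>e. (\<forall>i. e i \<noteq> []) \<and> outcome a e = (\<lambda>k. x k \<noteq> (k \<in> D))" if "finite D" for D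
  proof (intro exI conjI allI ext)
    define e where "e = prefix_limit (H D)"
    have long_history: "\<exists>n. k < length (H D n)" for k
      using unbounded_stage_history[OF that, of "Suc k" a] by (auto simp: H_def Suc_le_eq)
    show "e i \<noteq> []" for i
    proof -
      obtain n where "i < length (H D n)" using long_history ..
      then have "e i \<in> set (H D n)"
        unfolding e_def by (metis nth_mem nth_prefix_limit[of "H D", OF H_chain])
      then show ?thesis using consistent(2) by blast
    qed
    show "outcome a e k = (x k \<noteq> (k \<in> D))" for k
    proof -
      obtain n where "k < length (H D n)" using long_history ..
      also have "\<dots> \<le> length (partial_outcome a (H D n))"
        using consistent(2) by (rule length_partial_outcome_ge)
      finally have k_outcome: "k < length (partial_outcome a (H D n))" .
      then have k_X: "k < length (X n)"
        using prefix_length_le[OF consistent(1)[of D n]] by simp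
      have "outcome a e k = partial_outcome a (H D n) ! k"
        using k_outcome nth_outcome[of k a e "length (H D n)"]
        by (simp add: e_def map_prefix_limit[of "H D", OF H_chain])
      also have "\<dots> = toggle D (X n) ! k"
        using consistent(1) k_outcome by (rule nth_prefix)
      also have "\<dots> = (x k \<noteq> (k \<in> D))"
        using k_X by (simp add: x_def nth_prefix_limit[of X, OF X_chain])
      finally show ?thesis .
    qed
  qed
  then show ?thesis by blast
qed

theorem proposition7:
  fixes F :: "(nat \<Rightarrow> bool) set"
  assumes "\<exists>a. alter_winning F a"
  shows "\<exists>x. {y. hamming_equiv x y} \<inter> F = {}"
proof -
  obtain a where winning: "alter_winning F a" using assms ..
  obtain x where x: "\<forall>D. finite D \<longrightarrow> (\<exists>e. (\<forall>i. e i \<noteq> []) \<and> outcome a e = (\<lambda>k. x k \<noteq> (k \<in> D)))"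
    using finite_variants_are_outcomes by blast
  have "y \<notin> F" if "hamming_equiv x y" for y
  proof -
    have "finite {k. x k \<noteq> y k}" using that by (simp add: hamming_equiv_def)
    then obtain e where "\<forall>i. e i \<noteq> []" "outcome a e = (\<lambda>k. x k \<noteq> (k \<in> {k. x k \<noteq> y k}))"
      using x by blast
    moreover have "(\<lambda>k. x k \<noteq> (k \<in> {k. x k \<noteq> y k})) = y" by auto
    ultimately show ?thesis using winning by (auto simp: alter_winning_def)
  qed
  then show ?thesis by blast
qed

end
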